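(* Let $m=(m_0,\dots,m_s)$ be a vector of odd integers $\ge 3$ and $A=\bigoplus_{\ell=0}^s\mathbb{Z}_{m_\ell}$. Define the matrix $\overline{S}$, with rows and columns indexed by $A\times A$ (with $(0,0)$ as the first index), whose entry in row $(\tilde k,\tilde\kappa)$ and column $(k,\kappa)$ is \[ s_{(k,\kappa),(\tilde k,\tilde\kappa)}=-\prod_{\ell=0}^s\zeta_{m_\ell}^{2^{-1}(\kappa_\ell\tilde k_\ell-\tilde\kappa_\ell k_\ell)}\] when $(\tilde k,\tilde\kappa)$, $(k,\kappa)$ and $(0,0)$ are pairwise distinct, and $s_{(k,\kappa),(\tilde k,\tilde\kappa)}=1-\delta_{(k,\kappa),(\tilde k,\tilde\kappa)}$ otherwise. Then $\overline{S}$ is a normalized signature matrix of the Gabor–Steiner ETF $\mathcal{G}(m)$.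
   Context: Let $|m|=\prod_\ell m_\ell$, and for each $\ell$ fix a primitive $m_\ell$-th root of unity $\zeta_{m_\ell}$; in exponents, $2^{-1}$ denotes the inverse of $2$ modulo $m_\ell$ (well defined since $m_\ell$ is odd). Let $T_{m_\ell}$ be the $m_\ell\times m_\ell$ circulant matrix with first row $(0,1,0,\dots,0)$ and $M_{m_\ell}=\mathrm{diag}(1,\zeta_{m_\ell},\dots,\zeta_{m_\ell}^{m_\ell-1})$. For $k,\kappa\in A$ put $T^{(k)}=\bigotimes_{\ell=0}^sT_{m_\ell}^{k_\ell}$ and $M^{(\kappa)}=\bigotimes_{\ell=0}^sM_{m_\ell}^{\kappa_\ell}$ (Kronecker products), and $\pi(k,\kappa)=I_{(|m|-1)/2}\otimes(M^{(\kappa)}T^{(k)})$. Index the coordinates of $\mathbb{C}^{|m|}$ by $A$ in lexicographic order (representatives $0,\dots,m_\ell-1$). Let $\mathcal{I}$ be the set of the first $(|m|-1)/2$ elements of $A$ in lexicographic order. For $i\in\mathcal{I}$ let $\phi_i\in\mathbb{C}^{|m|}$ have entry $1$ at index $j=i$, entry $-1$ at index $j=-i-\mathbb{1}$ (computed in $A$, where $\mathbb{1}=(1,\dots,1)\in A$), and $0$ elsewhere. Let $\psi\in\mathbb{C}^{|m|(|m|-1)/2}$ be the vector obtained by stacking the $\phi_i$, $i\in\mathcal{I}$, vertically in lexicographic order. The Gabor–Steiner ETF is $\mathcal{G}(m)=\{\varphi_{k,\kappa}:=\pi(k,\kappa)\psi:(k,\kappa)\in A\times A\}$; it is known that these $|m|^2$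 vectors all have the same norm $\nu$ and pairwise inner products of the same absolute value $\alpha>0$ (they form an equiangular tight frame up to scaling). For such a family $\Phi=\{\varphi_x\}_{x\in X}$, its signature matrix is $S=(\Phi^*\Phi-\nu^2I)/\alpha$, where $(\Phi^*\Phi)_{x,y}=\varphi_x^*\varphi_y$. A normalized signature matrix of $\Phi$ is the signature matrix of a switching-equivalent family $\{c_x\varphi_x\}_{x\in X}$ with unimodular scalars $c_x$, in which all off-diagonal entries of the first row and first column are equal to $1$. *)

theory Defs
  imports "HOL-Analysis.Analysis"
begin

(* The group A = Z_{m_0} (+) ... (+) Z_{m_s}: elements are lists k of length |m|
   with 0 <= k!l < m!l (canonical representatives 0..m_l-1). *)
definition GA :: "nat list \<Rightarrow> nat list set" where
  "GA m = {k. length k = length m \<and> (\<forall>l<length m. k ! l < m ! l)}"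

definition ga_zero :: "nat list \<Rightarrow> nat list" where
  "ga_zero m = replicate (length m) 0"

definition ga_neg_minus_one :: "nat list \<Rightarrow> nat list \<Rightarrow> nat list" where
  "ga_neg_minus_one m i = map (\<lambda>l. (2 * (m ! l) - i ! l - 1) mod (m ! l)) [0..<length m]"

definition absm :: "nat list \<Rightarrow> nat" where
  "absm m = prod_list m"

definition Iset :: "nat list \<Rightarrow> nat list set" where
  "Iset m = {i \<in> GA m. card {j \<in> GA m. lexordp (<) j i} < (absm m - 1) div 2}"

definition phi_vec :: "nat list \<Rightarrow> nat list \<Rightarrow> nat list \<Rightarrow> complex" where
  "phi_vec m i j = (if j = i then 1 else if j = ga_neg_minus_one m i then -1 else 0)"

(* n x n matrices as functions on indices 0..n-1 *)
definition circ_shift :: "nat \<Rightarrow> nat \<Rightarrow> nat \<Rightarrow> complex" where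
  "circ_shift n i j = (if j = (i + 1) mod n then 1 else 0)"

definition mod_diag :: "complex \<Rightarrow> nat \<Rightarrow> nat \<Rightarrow> nat \<Rightarrow> complex" where
  "mod_diag z n i j = (if i = j then z ^ i else 0)"

definition sq_mult :: "nat \<Rightarrow> (nat \<Rightarrow> nat \<Rightarrow> complex) \<Rightarrow> (nat \<Rightarrow> nat \<Rightarrow> complex) \<Rightarrow> nat \<Rightarrow> nat \<Rightarrow> complex" where
  "sq_mult n B C i j = (\<Sum>r<n. B i r * C r j)"

primrec sq_pow :: "nat \<Rightarrow> (nat \<Rightarrow> nat \<Rightarrow> complex) \<Rightarrow> nat \<Rightarrow> nat \<Rightarrow> nat \<Rightarrow> complex" where
  "sq_pow n B 0 = (\<lambda>i j. if i = j then 1 else 0)"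
| "sq_pow n B (Suc k) = sq_mult n (sq_pow n B k) B"

(* Kronecker product of the factors Bs 0, ..., Bs s, rows/columns indexed by A
   (lexicographic indexing of the Kronecker product) *)
definition kron :: "nat list \<Rightarrow> (nat \<Rightarrow> nat \<Rightarrow> nat \<Rightarrow> complex) \<Rightarrow> nat list \<Rightarrow> nat list \<Rightarrow> complex" where
  "kron m Bs j j' = (\<Prod>l<length m. Bs l (j ! l) (j' ! l))"

definition T_op :: "nat list \<Rightarrow> nat list \<Rightarrow> nat list \<Rightarrow> nat list \<Rightarrow> complex" where
  "T_op m k = kron m (\<lambda>l. sq_pow (m ! l) (circ_shift (m ! l)) (k ! l))"

definition M_op :: "nat list \<Rightarrow> (nat \<Rightarrow> complex) \<Rightarrow> nat list \<Rightarrow> nat list \<Rightarrow> nat list \<Rightarrow> complex" where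
  "M_op m zeta \<kappa> = kron m (\<lambda>l. sq_pow (m ! l) (mod_diag (zeta l) (m ! l)) (\<kappa> ! l))"

definition A_mult :: "nat list \<Rightarrow> (nat list \<Rightarrow> nat list \<Rightarrow> complex) \<Rightarrow> (nat list \<Rightarrow> nat list \<Rightarrow> complex) \<Rightarrow> nat list \<Rightarrow> nat list \<Rightarrow> complex" where
  "A_mult m P Q j j' = (\<Sum>r\<in>GA m. P j r * Q r j')"

definition A_app :: "nat list \<Rightarrow> (nat list \<Rightarrow> nat list \<Rightarrow> complex) \<Rightarrow> (nat list \<Rightarrow> complex) \<Rightarrow> nat list \<Rightarrow> complex" where
  "A_app m P v j = (\<Sum>j'\<in>GA m. P j j' * v j')"

(* psi stacks phi_i (i in I); pi(k,kappa) = I \<otimes> (M^(kappa) T^(k)) acts blockwise.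
   The coordinates of the vector in C^{|m|(|m|-1)/2} are indexed by (i, j) in Iset m \<times> GA m. *)
definition gabor_steiner :: "nat list \<Rightarrow> (nat \<Rightarrow> complex) \<Rightarrow> nat list \<times> nat list \<Rightarrow> nat list \<times> nat list \<Rightarrow> complex" where
  "gabor_steiner m zeta x p =
     (case x of (k, \<kappa>) \<Rightarrow> case p of (i, j) \<Rightarrow>
        A_app m (A_mult m (M_op m zeta \<kappa>) (T_op m k)) (phi_vec m i) j)"

definition gs_coords :: "nat list \<Rightarrow> (nat list \<times> nat list) set" where
  "gs_coords m = Iset m \<times> GA m"

definition cip :: "'y set \<Rightarrow> ('y \<Rightarrow> complex) \<Rightarrow> ('y \<Rightarrow> complex) \<Rightarrow> complex" where
  "cip Y u v = (\<Sum>y\<in>Y. cnj (u y) * v y)"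

definition is_signature_matrix :: "'y set \<Rightarrow> 'x set \<Rightarrow> ('x \<Rightarrow> 'y \<Rightarrow> complex) \<Rightarrow> ('x \<Rightarrow> 'x \<Rightarrow> complex) \<Rightarrow> bool" where
  "is_signature_matrix Y X Phi S \<longleftrightarrow>
     (\<exists>\<nu> \<alpha>::real. \<nu> \<ge> 0 \<and> \<alpha> > 0 \<and>
        (\<forall>x\<in>X. cip Y (Phi x) (Phi x) = complex_of_real (\<nu>\<^sup>2)) \<and>
        (\<forall>x\<in>X. \<forall>y\<in>X. x \<noteq> y \<longrightarrow> cmod (cip Y (Phi x) (Phi y)) = \<alpha>) \<and>
        (\<forall>x\<in>X. \<forall>y\<in>X. S x y =
            (cip Y (Phi x) (Phi y) - (if x = y then complex_of_real (\<nu>\<^sup>2) else 0)) / complex_of_real \<alpha>))"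

definition is_normalized_signature_matrix :: "'y set \<Rightarrow> 'x set \<Rightarrow> 'x \<Rightarrow> ('x \<Rightarrow> 'y \<Rightarrow> complex) \<Rightarrow> ('x \<Rightarrow> 'x \<Rightarrow> complex) \<Rightarrow> bool" where
  "is_normalized_signature_matrix Y X x0 Phi S \<longleftrightarrow>
     (\<exists>c. (\<forall>x\<in>X. cmod (c x) = 1) \<and>
          is_signature_matrix Y X (\<lambda>x y. c x * Phi x y) S \<and>
          (\<forall>x\<in>X. x \<noteq> x0 \<longrightarrow> S x0 x = 1 \<and> S x x0 = 1))"

(* the matrix S-bar; Sbar m zeta x y is the entry in row x, column y *)
definition Sbar :: "nat list \<Rightarrow> (nat \<Rightarrow> complex) \<Rightarrow> nat list \<times> nat list \<Rightarrow> nat list \<times> nat list \<Rightarrow> complex" where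
  "Sbar m zeta x y =
     (let x0 = (ga_zero m, ga_zero m) in
      if x \<noteq> y \<and> x \<noteq> x0 \<and> y \<noteq> x0 then
        (case x of (k, \<kappa>) \<Rightarrow> case y of (kt, \<kappa>t) \<Rightarrow>
          - (\<Prod>l<length m. zeta l ^ nat ((int ((m ! l + 1) div 2) *
                 (int (\<kappa> ! l) * int (kt ! l) - int (\<kappa>t ! l) * int (k ! l))) mod int (m ! l))))
      else (if x = y then 0 else 1))"

end

(*
  Writing the frame vectors as \<phi>\<^sub>k\<^sub>,\<^sub>\<kappa>(i, j) = \<chi>\<^sub>\<kappa>(j) \<phi>\<^sub>i(j + k) with the characters
  \<chi>\<^sub>\<kappa>(j) = \<Prod>\<^sub>l \<zeta>\<^sub>l^(j\<^sub>l \<kappa>\<^sub>l), the inner product splits into a sum over j of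
  conj(\<chi>\<^sub>\<kappa>(j)) \<chi>\<^sub>\<kappa>\<^sub>'(j) times \<Sum>\<^sub>i\<^sub>\<in>\<^sub>\<I> \<phi>\<^sub>i(j + k) \<phi>\<^sub>i(j + k').  Since \<I>, its image under
  a \<mapsto> -a - 1 and the single fixed point of that involution partition A, the inner sum is
  \<delta>(k, k') - \<delta>(j + k', -(j + k) - 1).  Character orthogonality turns the first term into
  |m| \<delta>((k, \<kappa>), (k', \<kappa>')), and the second picks out the unique j = 2\<^sup>-\<^sup>1(-1 - k - k').  So the Gram
  matrix is |m| I - \<gamma> with \<gamma> unimodular and \<gamma>(x, x) = 1: the family is equiangular with
  \<nu>\<^sup>2 = |m| - 1 and \<alpha> = 1.  The phases c\<^sub>x = -\<gamma>(x, 0), x \<noteq> 0, normalize the first row and column, and the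
  remaining entries -\<gamma>(0, x) \<gamma>(x, y) \<gamma>(y, 0) are the roots of unity of S-bar.
*)

theory Submission
  imports Defs
begin

lemma sum_eq_single:
  assumes "finite S" "a \<in> S" "\<And>r. r \<in> S \<Longrightarrow> r \<noteq> a \<Longrightarrow> f r = 0"
  shows "sum f S = f a"
proof -
  have "sum f S = f a + sum f (S - {a})" using assms by (simp add: sum.remove)
  also have "sum f (S - {a}) = 0" using assms by (intro sum.neutral) auto
  finally show ?thesis by simp
qed

lemma prod_indicator:
  "(\<Prod>l<(n::nat). if P l then 1 else (0 :: 'a :: comm_semiring_1)) = (if \<forall>l<n. P l then 1 else 0)"
  by (induction n) (auto simp: less_Suc_eq)

lemma mult_if_delta: "a * (if P then 1 else 0) = (if P then a else (0 :: 'a :: semiring_1))"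
  by simp

lemma odd_prod_list: "(\<And>x. x \<in> set ns \<Longrightarrow> odd x) \<Longrightarrow> odd (prod_list (ns :: nat list))"
  by (induction ns) auto

section \<open>Roots of unity\<close>

lemma root_unity_nonzero:
  fixes z :: complex assumes "z ^ n = 1" "n > 0" shows "z \<noteq> 0"
  using assms by (cases "z = 0") (auto simp: power_0_left)

lemma norm_root_unity:
  fixes z :: complex assumes "z ^ n = 1" "n > 0" shows "norm z = 1"
proof -
  have "norm z ^ n = 1 ^ n" using assms by (metis norm_one norm_power power_one)
  then show ?thesis using assms power_eq_imp_eq_base by (metis norm_ge_zero zero_le_one)
qed

lemma power_int_mod_root_unity:
  fixes z :: complex assumes "z ^ n = 1" "n > 0"
  shows "z powi (a mod int n) = z powi a"
proof -
  have nz: "z \<noteq> 0" using assms by (rule root_unity_nonzero)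
  have "a = a mod int n + int n * (a div int n)" by simp
  then have "z powi a = z powi (a mod int n) * z powi (int n * (a div int n))"
    by (metis nz power_int_add)
  also have "z powi (int n * (a div int n)) = (z powi int n) powi (a div int n)"
    by (simp add: power_int_mult)
  also have "z powi int n = 1" using assms by (simp add: power_int_of_nat)
  finally show ?thesis by simp
qed

lemma power_nat_mod_root_unity:
  fixes z :: complex assumes "z ^ n = 1" "n > 0"
  shows "z ^ nat (a mod int n) = z powi a"
proof -
  have "z ^ nat (a mod int n) = z powi int (nat (a mod int n))" by (simp only: power_int_of_nat)
  also have "int (nat (a mod int n)) = a mod int n" using assms by simp
  finally show ?thesis using power_int_mod_root_unity[OF assms] by simp
qed

lemma power_int_primitive_root_eq_1_iff:
  fixes z :: complex
  assumes "z ^ n = 1" "n > 0" "\<And>d. 0 < d \<Longrightarrow> d < n \<Longrightarrow> z ^ d \<noteq> 1"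
  shows "z powi a = 1 \<longleftrightarrow> int n dvd a"
proof
  assume "z powi a = 1"
  then have "z ^ nat (a mod int n) = 1" using power_nat_mod_root_unity[OF assms(1,2)] by simp
  moreover have "nat (a mod int n) < n" using assms(2) by (simp add: nat_less_iff)
  ultimately have "nat (a mod int n) = 0" using assms(3) by blast
  moreover have "0 \<le> a mod int n" using assms(2) by simp
  ultimately show "int n dvd a" by (simp add: dvd_eq_mod_eq_0)
next
  assume "int n dvd a"
  then show "z powi a = 1" using power_int_mod_root_unity[OF assms(1,2), of a] by simp
qed

lemma cnj_power_int_root_unity:
  fixes z :: complex assumes "z ^ n = 1" "n > 0"
  shows "cnj (z powi a) = z powi (- a)"
proof -
  have "cnj z * z = 1" using norm_root_unity[OF assms] complex_norm_square[of z] by (simp add: mult.commute)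
  then have "cnj z = inverse z" by (metis inverse_unique mult.commute)
  then show ?thesis by (simp add: power_int_inverse power_int_minus)
qed

lemma sum_power_int_primitive_root:
  fixes z :: complex
  assumes "z ^ n = 1" "n > 0" "\<And>d. 0 < d \<Longrightarrow> d < n \<Longrightarrow> z ^ d \<noteq> 1"
  shows "(\<Sum>t<n. z powi (int t * e)) = (if int n dvd e then of_nat n else 0)"
proof -
  define w where "w = z powi e"
  have powers: "z powi (int t * e) = w ^ t" for t
    unfolding w_def by (metis mult.commute power_int_mult power_int_of_nat)
  have "w ^ n = (z powi int n) powi e" using powers[of n] by (simp add: power_int_mult)
  then have "w ^ n = 1" using assms(1) by (simp add: power_int_of_nat)
  moreover have "w = 1 \<longleftrightarrow> int n dvd e"
    unfolding w_def by (rule power_int_primitive_root_eq_1_iff[OF assms])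
  ultimately show ?thesis by (auto simp: powers sum_gp_strict)
qed

section \<open>The group A and the vectors \<open>\<phi>\<^sub>i\<close>\<close>

lemma GA_Nil: "GA [] = {[]}"
  by (auto simp: GA_def)

lemma GA_Cons: "GA (x # m) = (\<lambda>(a, t). a # t) ` ({..<x} \<times> GA m)"
proof (rule set_eqI, rule iffI)
  fix k assume "k \<in> GA (x # m)"
  then obtain a t where k: "k = a # t" and "length t = length m"
    and h: "\<forall>l<Suc (length m). k ! l < (x # m) ! l"
    by (auto simp: GA_def length_Suc_conv)
  have "a < x" using h[rule_format, of 0] k by simp
  moreover have "\<forall>l<length m. t ! l < m ! l"
    using h k by (metis Suc_mono nth_Cons_Suc)
  ultimately show "k \<in> (\<lambda>(a, t). a # t) ` ({..<x} \<times> GA m)"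
    using k \<open>length t = length m\<close> by (auto simp: GA_def)
next
  fix k assume "k \<in> (\<lambda>(a, t). a # t) ` ({..<x} \<times> GA m)"
  then show "k \<in> GA (x # m)"
    by (auto simp: GA_def nth_Cons split: nat.splits)
qed

lemma inj_on_Cons_pair: "inj_on (\<lambda>(a, t). a # t) (A \<times> B)"
  by (auto simp: inj_on_def)

lemma finite_GA: "finite (GA m)"
  by (induction m) (auto simp: GA_Nil GA_Cons)

lemma card_GA: "card (GA m) = prod_list m"
  by (induction m) (simp_all add: GA_Nil GA_Cons card_image[OF inj_on_Cons_pair] card_cartesian_product)

lemma sum_GA_prod_nth:
  "(\<Sum>j\<in>GA m. \<Prod>l<length m. f l (j ! l)) = (\<Prod>l<length m. \<Sum>t<m ! l. (f l t :: complex))"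
proof (induction m arbitrary: f)
  case Nil then show ?case by (simp add: GA_Nil)
next
  case (Cons x m)
  have "(\<Sum>j\<in>GA (x # m). \<Prod>l<length (x # m). f l (j ! l))
      = (\<Sum>p\<in>{..<x} \<times> GA m. f 0 (fst p) * (\<Prod>l<length m. f (Suc l) (snd p ! l)))"
    by (simp only: GA_Cons sum.reindex[OF inj_on_Cons_pair] o_def case_prod_beta
        length_Cons prod.lessThan_Suc_shift nth_Cons_0 nth_Cons_Suc)
  also have "\<dots> = (\<Sum>a<x. \<Sum>t\<in>GA m. f 0 a * (\<Prod>l<length m. f (Suc l) (t ! l)))"
    by (simp add: sum.cartesian_product case_prod_beta)
  also have "\<dots> = (\<Sum>a<x. f 0 a) * (\<Sum>t\<in>GA m. \<Prod>l<length m. f (Suc l) (t ! l))"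
    by (simp add: sum_product)
  also have "\<dots> = (\<Prod>l<length (x # m). \<Sum>t<(x # m) ! l. f l t)"
    using Cons[of "\<lambda>l. f (Suc l)"] by (simp only: length_Cons prod.lessThan_Suc_shift nth_Cons_0 nth_Cons_Suc)
  finally show ?case .
qed

lemma nth_ga_zero: "l < length m \<Longrightarrow> ga_zero m ! l = 0"
  by (simp add: ga_zero_def)

definition ga_add :: "nat list \<Rightarrow> nat list \<Rightarrow> nat list \<Rightarrow> nat list" where
  "ga_add m j k = map (\<lambda>l. (j ! l + k ! l) mod m ! l) [0..<length m]"

lemma length_ga_add [simp]: "length (ga_add m j k) = length m"
  by (simp add: ga_add_def)

lemma nth_ga_add: "l < length m \<Longrightarrow> ga_add m j k ! l = (j ! l + k ! l) mod m ! l"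
  by (simp add: ga_add_def)

lemma ga_add_in_GA: "\<forall>l<length m. 0 < m ! l \<Longrightarrow> ga_add m j k \<in> GA m"
  by (auto simp: ga_add_def GA_def)

lemma add_mod_left_cancel:
  fixes a b c n :: nat
  assumes "b < n" "c < n" "(a + b) mod n = (a + c) mod n"
  shows "b = c"
proof (rule ccontr)
  assume "b \<noteq> c"
  have "int n dvd int (a + b) - int (a + c)"
    using assms(3) by (metis mod_eq_dvd_iff of_nat_mod)
  then have "int n dvd \<bar>int b - int c\<bar>" by simp
  moreover have "0 < \<bar>int b - int c\<bar>" "\<bar>int b - int c\<bar> < int n" using assms \<open>b \<noteq> c\<close> by auto
  ultimately show False using zdvd_imp_le by fastforce
qed

lemma ga_add_left_cancel:
  assumes "k \<in> GA m" "k' \<in> GA m"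
  shows "ga_add m j k = ga_add m j k' \<longleftrightarrow> k = k'"
proof
  assume eq: "ga_add m j k = ga_add m j k'"
  have "k ! l = k' ! l" if l: "l < length m" for l
  proof (rule add_mod_left_cancel)
    show "k ! l < m ! l" "k' ! l < m ! l" using assms l by (auto simp: GA_def)
    show "(j ! l + k ! l) mod m ! l = (j ! l + k' ! l) mod m ! l" using eq l by (metis nth_ga_add)
  qed
  then show "k = k'" using assms by (simp add: GA_def list_eq_iff_nth_eq)
qed simp

lemma length_ga_neg_minus_one [simp]: "length (ga_neg_minus_one m a) = length m"
  by (simp add: ga_neg_minus_one_def)

lemma nth_ga_neg_minus_one:
  assumes "a \<in> GA m" "l < length m"
  shows "ga_neg_minus_one m a ! l = m ! l - 1 - a ! l"
proof -
  have lt: "a ! l < m ! l" using assms by (auto simp: GA_def)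
  have "2 * m ! l - a ! l - 1 = m ! l - 1 - a ! l + 1 * m ! l" using lt by simp
  then have "(2 * m ! l - a ! l - 1) mod m ! l = (m ! l - 1 - a ! l + 1 * m ! l) mod m ! l"
    by (simp only:)
  also have "\<dots> = m ! l - 1 - a ! l" using lt by (simp only: mod_mult_self1) simp
  finally show ?thesis using assms(2) by (simp add: ga_neg_minus_one_def)
qed

lemma ga_neg_minus_one_in_GA: "a \<in> GA m \<Longrightarrow> ga_neg_minus_one m a \<in> GA m"
  by (auto simp: GA_def nth_ga_neg_minus_one)

lemma ga_neg_minus_one_involutive: "a \<in> GA m \<Longrightarrow> ga_neg_minus_one m (ga_neg_minus_one m a) = a"
  using ga_neg_minus_one_in_GA[of a m]
  by (auto simp: GA_def nth_ga_neg_minus_one list_eq_iff_nth_eq)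

lemma ga_neg_minus_one_eq_map2:
  "a \<in> GA m \<Longrightarrow> ga_neg_minus_one m a = map2 (\<lambda>x y. x - 1 - y) m a"
  by (auto simp: GA_def nth_ga_neg_minus_one list_eq_iff_nth_eq)

lemma lexordp_less_conv: "List.lexordp (<) xs ys = ord_class.lexordp (xs :: nat list) ys"
  by (simp add: List.lexordp_def lexordp_conv_lexord)

lemma lexordp_map2_complement:
  "list_all2 (<) xs ms \<Longrightarrow> list_all2 (<) ys ms \<Longrightarrow>
   lexordp (<) (map2 (\<lambda>x y. x - 1 - y) ms xs) (map2 (\<lambda>x y. x - 1 - y) ms ys)
   = lexordp (<) ys (xs :: nat list)"
proof (induction xs ms arbitrary: ys rule: list_all2_induct)
  case Nil then show ?case by simp
next
  case (Cons x xs m ms)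
  then obtain y ys' where "ys = y # ys'" "y < m" "list_all2 (<) ys' ms"
    by (cases ys) auto
  then show ?case using Cons by (auto simp: lexordp_less_conv)
qed

lemma lexordp_ga_neg_minus_one:
  assumes "a \<in> GA m" "b \<in> GA m"
  shows "lexordp (<) (ga_neg_minus_one m a) (ga_neg_minus_one m b) = lexordp (<) b a"
proof -
  have "list_all2 (<) a m" "list_all2 (<) b m"
    using assms by (auto simp: GA_def list_all2_conv_all_nth)
  then show ?thesis
    unfolding ga_neg_minus_one_eq_map2[OF assms(1)] ga_neg_minus_one_eq_map2[OF assms(2)]
    by (rule lexordp_map2_complement)
qed

definition lex_rank :: "nat list \<Rightarrow> nat list \<Rightarrow> nat" where
  "lex_rank m a = card {j \<in> GA m. lexordp (<) j a}"

lemma Iset_eq_lex_rank: "Iset m = {i \<in> GA m. lex_rank m i < (prod_list m - 1) div 2}"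
  by (simp add: Iset_def lex_rank_def absm_def)

lemma lex_rank_add_card_greater:
  assumes "a \<in> GA m"
  shows "lex_rank m a + card {j \<in> GA m. lexordp (<) a j} + 1 = prod_list m"
proof -
  let ?L = "{j \<in> GA m. lexordp (<) j a}" and ?R = "{j \<in> GA m. lexordp (<) a j}"
  have GA: "GA m = insert a (?L \<union> ?R)"
    using assms lexordp_linear[of a] by (auto simp: lexordp_less_conv)
  have "a \<notin> ?L \<union> ?R" "?L \<inter> ?R = {}"
    using lexordp_irreflexive' lexordp_antisym by (auto simp: lexordp_less_conv)
  then have "card (GA m) = card (?L \<union> ?R) + 1"
    using arg_cong[of _ _ card, OF GA] finite_GA[of m] by simp
  also have "card (?L \<union> ?R) = card ?L + card ?R"
    using \<open>?L \<inter> ?R = {}\<close> finite_GA[of m] by (intro card_Un_disjoint) auto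
  finally show ?thesis by (simp add: card_GA lex_rank_def)
qed

lemma lex_rank_ga_neg_minus_one:
  assumes a: "a \<in> GA m"
  shows "lex_rank m (ga_neg_minus_one m a) = prod_list m - 1 - lex_rank m a"
proof -
  let ?R = "{j \<in> GA m. lexordp (<) a j}"
  have "{j \<in> GA m. lexordp (<) j (ga_neg_minus_one m a)} = ga_neg_minus_one m ` ?R"
  proof (rule set_eqI, rule iffI)
    fix j assume j: "j \<in> {j \<in> GA m. lexordp (<) j (ga_neg_minus_one m a)}"
    then have "lexordp (<) a (ga_neg_minus_one m j)"
      using lexordp_ga_neg_minus_one[of "ga_neg_minus_one m j" m a] a
      by (simp add: ga_neg_minus_one_involutive ga_neg_minus_one_in_GA)
    then show "j \<in> ga_neg_minus_one m ` ?R" using j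
      by (intro image_eqI[of _ _ "ga_neg_minus_one m j"])
        (auto simp: ga_neg_minus_one_involutive ga_neg_minus_one_in_GA)
  next
    fix j assume "j \<in> ga_neg_minus_one m ` ?R"
    then show "j \<in> {j \<in> GA m. lexordp (<) j (ga_neg_minus_one m a)}"
      using a lexordp_ga_neg_minus_one ga_neg_minus_one_in_GA by auto
  qed
  moreover have "inj_on (ga_neg_minus_one m) ?R"
    by (rule inj_on_inverseI[where g="ga_neg_minus_one m"]) (simp add: ga_neg_minus_one_involutive)
  ultimately have "lex_rank m (ga_neg_minus_one m a) = card ?R"
    by (simp add: lex_rank_def card_image)
  then show ?thesis using lex_rank_add_card_greater[OF a] by simp
qed

lemma inj_on_lex_rank: "inj_on (lex_rank m) (GA m)"
proof -
  have less: "lex_rank m x < lex_rank m y"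
    if "x \<in> GA m" "y \<in> GA m" "lexordp (<) x y" for x y
  proof -
    have "{j \<in> GA m. lexordp (<) j x} \<subset> {j \<in> GA m. lexordp (<) j y}"
      using that lexordp_trans[of _ x y] lexordp_irreflexive'[of x]
      by (auto simp: lexordp_less_conv)
    then show ?thesis unfolding lex_rank_def using finite_GA by (intro psubset_card_mono) auto
  qed
  show ?thesis
  proof (rule inj_onI, rule ccontr)
    fix x y assume "x \<in> GA m" "y \<in> GA m" "lex_rank m x = lex_rank m y" "x \<noteq> y"
    then show False
      using lexordp_linear[of x y] less[of x y] less[of y x] by (auto simp: lexordp_less_conv)
  qed
qed

text \<open>For odd \<open>|m|\<close>, the involution \<open>a \<mapsto> -a - 1\<close> reverses the lexicographic order, so it
  swaps \<open>\<I>\<close> with the last \<open>(|m| - 1)/2\<close> elements and fixes the middle one.\<close>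

lemma ga_neg_minus_one_notin_Iset:
  assumes "odd (prod_list m)" "i \<in> Iset m"
  shows "ga_neg_minus_one m i \<notin> Iset m"
proof -
  have "i \<in> GA m" "lex_rank m i < (prod_list m - 1) div 2"
    using assms(2) by (auto simp: Iset_eq_lex_rank)
  then have "\<not> lex_rank m (ga_neg_minus_one m i) < (prod_list m - 1) div 2"
    using assms(1) lex_rank_ga_neg_minus_one[of i m] by (auto elim!: oddE)
  then show ?thesis by (simp add: Iset_eq_lex_rank)
qed

lemma ga_neg_minus_one_fixed_outside_Iset:
  assumes "odd (prod_list m)" "a \<in> GA m" "a \<notin> Iset m" "ga_neg_minus_one m a \<notin> Iset m"
  shows "ga_neg_minus_one m a = a"
proof -
  have "\<not> lex_rank m a < (prod_list m - 1) div 2"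
    "\<not> lex_rank m (ga_neg_minus_one m a) < (prod_list m - 1) div 2"
    using assms(2-4) ga_neg_minus_one_in_GA[OF assms(2)] by (auto simp: Iset_eq_lex_rank)
  moreover have "lex_rank m a \<le> prod_list m - 1"
    using lex_rank_add_card_greater[OF assms(2)] by simp
  ultimately have "lex_rank m (ga_neg_minus_one m a) = lex_rank m a"
    using assms(1) lex_rank_ga_neg_minus_one[OF assms(2)] by (auto elim!: oddE)
  then show ?thesis
    using inj_on_lex_rank assms(2) ga_neg_minus_one_in_GA by (blast dest: inj_onD)
qed

lemma sum_Iset_phi_vec:
  assumes odd: "odd (prod_list m)" and a: "a \<in> GA m" and b: "b \<in> GA m"
  shows "(\<Sum>i\<in>Iset m. phi_vec m i a * phi_vec m i b)
       = (if a = b then 1 else 0) - (if b = ga_neg_minus_one m a then 1 else 0)"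
proof -
  let ?a' = "ga_neg_minus_one m a"
  have fin: "finite (Iset m)" using finite_GA finite_subset by (auto simp: Iset_def)
  have support: "i = a \<or> i = ?a'" if "i \<in> Iset m" "phi_vec m i a * phi_vec m i b \<noteq> 0" for i
    using that ga_neg_minus_one_involutive
    by (auto simp: phi_vec_def Iset_def split: if_splits)
  consider (fst) "a \<in> Iset m" | (snd) "?a' \<in> Iset m" | (mid) "a \<notin> Iset m" "?a' \<notin> Iset m"
    by blast
  then show ?thesis
  proof cases
    case fst
    then have "?a' \<notin> Iset m" using ga_neg_minus_one_notin_Iset odd by blast
    then have "(\<Sum>i\<in>Iset m. phi_vec m i a * phi_vec m i b) = phi_vec m a a * phi_vec m a b"
      using fin fst support by (intro sum_eq_single) auto
    then show ?thesis using fst \<open>?a' \<notin> Iset m\<close> by (auto simp: phi_vec_def)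
  next
    case snd
    then have "a \<notin> Iset m"
      using ga_neg_minus_one_notin_Iset[OF odd snd] ga_neg_minus_one_involutive[OF a] by simp
    then have "(\<Sum>i\<in>Iset m. phi_vec m i a * phi_vec m i b) = phi_vec m ?a' a * phi_vec m ?a' b"
      using fin snd support by (intro sum_eq_single) auto
    then show ?thesis using snd \<open>a \<notin> Iset m\<close> ga_neg_minus_one_involutive[OF a]
      by (auto simp: phi_vec_def)
  next
    case mid
    then have "(\<Sum>i\<in>Iset m. phi_vec m i a * phi_vec m i b) = 0"
      using support by (intro sum.neutral) blast
    then show ?thesis using ga_neg_minus_one_fixed_outside_Iset[OF odd a mid] by auto
  qed
qed

definition zeta_prod :: "nat list \<Rightarrow> (nat \<Rightarrow> complex) \<Rightarrow> (nat \<Rightarrow> int) \<Rightarrow> complex" where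
  "zeta_prod m zeta e = (\<Prod>l<length m. zeta l powi e l)"

definition character :: "nat list \<Rightarrow> (nat \<Rightarrow> complex) \<Rightarrow> (nat \<Rightarrow> int) \<Rightarrow> nat list \<Rightarrow> complex" where
  "character m zeta e j = zeta_prod m zeta (\<lambda>l. int (j ! l) * e l)"

lemma sq_pow_circ_shift:
  "i < n \<Longrightarrow> sq_pow n (circ_shift n) k i j = (if j = (i + k) mod n then 1 else 0)"
proof (induction k arbitrary: j)
  case (Suc k)
  have "sq_pow n (circ_shift n) (Suc k) i j
      = (\<Sum>r<n. (if r = (i + k) mod n then 1 else 0) * circ_shift n r j)"
    using Suc by (simp add: sq_mult_def)
  also have "\<dots> = circ_shift n ((i + k) mod n) j"
    using Suc.prems by (subst sum_eq_single[where a="(i + k) mod n"]) auto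
  also have "\<dots> = (if j = (i + Suc k) mod n then 1 else 0)"
    by (simp add: circ_shift_def mod_Suc_eq)
  finally show ?case .
qed simp

lemma sq_pow_mod_diag:
  "i < n \<Longrightarrow> sq_pow n (mod_diag z n) k i j = (if i = j then z ^ (i * k) else 0)"
proof (induction k arbitrary: j)
  case (Suc k)
  have "sq_pow n (mod_diag z n) (Suc k) i j
      = (\<Sum>r<n. (if i = r then z ^ (i * k) else 0) * mod_diag z n r j)"
    using Suc by (simp add: sq_mult_def)
  also have "\<dots> = z ^ (i * k) * mod_diag z n i j"
    using Suc.prems by (subst sum_eq_single[where a=i]) auto
  also have "\<dots> = (if i = j then z ^ (i * Suc k) else 0)"
    by (simp add: mod_diag_def power_add mult.commute)
  finally show ?case .
qed simp

lemma T_op_eq: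
  assumes "j \<in> GA m" "j' \<in> GA m"
  shows "T_op m k j j' = (if j' = ga_add m j k then 1 else 0)"
proof -
  have "T_op m k j j' = (\<Prod>l<length m. if j' ! l = (j ! l + k ! l) mod m ! l then 1 else 0)"
    unfolding T_op_def kron_def
    by (rule prod.cong) (use assms in \<open>auto simp: GA_def sq_pow_circ_shift\<close>)
  also have "\<dots> = (if j' = ga_add m j k then 1 else 0)"
    using assms by (simp only: prod_indicator) (auto simp: list_eq_iff_nth_eq nth_ga_add GA_def)
  finally show ?thesis .
qed

lemma M_op_eq:
  assumes "j \<in> GA m" "j' \<in> GA m"
  shows "M_op m zeta \<kappa> j j' = (if j = j' then character m zeta (\<lambda>l. int (\<kappa> ! l)) j else 0)"
proof -
  have "M_op m zeta \<kappa> j j' = (\<Prod>l<length m. if j ! l = j' ! l then zeta l ^ (j ! l * \<kappa> ! l) else 0)"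
    unfolding M_op_def kron_def
    by (rule prod.cong) (use assms in \<open>auto simp: GA_def sq_pow_mod_diag\<close>)
  also have "\<dots> = (if j = j' then character m zeta (\<lambda>l. int (\<kappa> ! l)) j else 0)"
  proof (cases "j = j'")
    case True
    then show ?thesis
      by (simp add: character_def zeta_prod_def power_int_of_nat[symmetric] del: power_int_of_nat)
  next
    case False
    then obtain l where "l < length m" "j ! l \<noteq> j' ! l"
      using assms by (auto simp: GA_def list_eq_iff_nth_eq)
    then show ?thesis using False by (auto intro!: prod_zero)
  qed
  finally show ?thesis .
qed

lemma gabor_steiner_eq:
  assumes pos: "\<forall>l<length m. 0 < m ! l" and j: "j \<in> GA m"
  shows "gabor_steiner m zeta (k, \<kappa>) (i, j)
       = character m zeta (\<lambda>l. int (\<kappa> ! l)) j * phi_vec m i (ga_add m j k)"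
proof -
  let ?\<chi> = "character m zeta (\<lambda>l. int (\<kappa> ! l)) j"
  have "A_mult m (M_op m zeta \<kappa>) (T_op m k) j j' = ?\<chi> * T_op m k j j'"
    if "j' \<in> GA m" for j'
    unfolding A_mult_def using j finite_GA
    by (subst sum_eq_single[where a=j]) (auto simp: M_op_eq)
  then have "gabor_steiner m zeta (k, \<kappa>) (i, j)
     = (\<Sum>j'\<in>GA m. if j' = ga_add m j k then ?\<chi> * phi_vec m i j' else 0)"
    unfolding gabor_steiner_def A_app_def using j by (auto simp: T_op_eq intro!: sum.cong)
  also have "\<dots> = ?\<chi> * phi_vec m i (ga_add m j k)"
    using ga_add_in_GA[OF pos] finite_GA by simp
  finally show ?thesis .
qed


section \<open>Halving modulo an odd number\<close>

lemma eq_complement_iff_dvd: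
  fixes x y M :: int
  assumes "0 \<le> x" "x < M" "0 \<le> y" "y < M"
  shows "y = M - 1 - x \<longleftrightarrow> M dvd x + y + 1"
proof
  assume "M dvd x + y + 1"
  then obtain q where q: "x + y + 1 = M * q" by (auto elim: dvdE)
  have "0 < q"
  proof (rule ccontr)
    assume "\<not> 0 < q"
    then have "M * q \<le> 0" using assms by (simp add: mult_nonneg_nonpos)
    then show False using q assms by simp
  qed
  moreover have "q < 2"
  proof (rule ccontr)
    assume "\<not> q < 2"
    then have "M * 2 \<le> M * q" using assms by (intro mult_left_mono) auto
    then show False using q assms by linarith
  qed
  ultimately have "q = 1" by simp
  then show "y = M - 1 - x" using q by simp
qed simp

lemma dvd_double_add_iff:
  fixes j s M h :: int
  assumes "2 * h = M + 1"
  shows "M dvd 2 * j + s \<longleftrightarrow> M dvd j + h * s"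
proof -
  have "h * (2 * j + s) = (2 * h) * j + h * s" by (simp add: algebra_simps)
  then have double: "h * (2 * j + s) = (j + h * s) + j * M"
    unfolding assms by (simp add: algebra_simps)
  have "2 * (j + h * s) = 2 * j + (2 * h) * s" by (simp add: algebra_simps)
  then have half: "2 * (j + h * s) = (2 * j + s) + s * M"
    unfolding assms by (simp add: algebra_simps)
  show ?thesis
  proof
    assume "M dvd 2 * j + s"
    then have "M dvd (j + h * s) + j * M" unfolding double[symmetric] by (rule dvd_mult)
    then show "M dvd j + h * s" by (simp only: dvd_add_times_triv_right_iff)
  next
    assume "M dvd j + h * s"
    then have "M dvd (2 * j + s) + s * M" unfolding half[symmetric] by (rule dvd_mult)
    then show "M dvd 2 * j + s" by (simp only: dvd_add_times_triv_right_iff)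
  qed
qed

lemma add_mod_eq_complement_iff:
  fixes j k k' n :: nat
  assumes odd: "odd n" and jn: "j < n"
  shows "(j + k') mod n = n - 1 - (j + k) mod n \<longleftrightarrow>
         j = nat ((int ((n + 1) div 2) * (- 1 - int k - int k')) mod int n)"
proof -
  have n0: "n > 0" using odd by (cases n) auto
  define x where "x = (j + k) mod n"
  define y where "y = (j + k') mod n"
  define h where "h = int ((n + 1) div 2)"
  define s where "s = 1 + int k + int k'"
  have xn: "x < n" "y < n" using n0 by (auto simp: x_def y_def)
  have "(y = n - 1 - x) \<longleftrightarrow> int y = int n - 1 - int x" using xn by auto
  also have "\<dots> \<longleftrightarrow> int n dvd int x + int y + 1" using xn by (intro eq_complement_iff_dvd) auto
  also have "int x + int y + 1 = (2 * int j + s) + (- int ((j + k) div n) - int ((j + k') div n)) * int n"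
  proof -
    have "int (j + k) = int x + int n * int ((j + k) div n)"
      "int (j + k') = int y + int n * int ((j + k') div n)"
      unfolding x_def y_def by (metis div_mult_mod_eq add.commute mult.commute of_nat_add of_nat_mult)+
    then show ?thesis unfolding s_def by (simp add: algebra_simps)
  qed
  also have "int n dvd \<dots> \<longleftrightarrow> int n dvd 2 * int j + s" by (rule dvd_add_times_triv_right_iff)
  also have "\<dots> \<longleftrightarrow> int n dvd int j + h * s"
    using odd by (intro dvd_double_add_iff) (auto simp: h_def elim!: oddE)
  also have "\<dots> \<longleftrightarrow> int j mod int n = (h * (- 1 - int k - int k')) mod int n"
  proof -
    have "int j + h * s = int j - h * (- 1 - int k - int k')" unfolding s_def by (simp add: algebra_simps)
    then show ?thesis by (simp add: mod_eq_dvd_iff)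
  qed
  also have "\<dots> \<longleftrightarrow> j = nat ((h * (- 1 - int k - int k')) mod int n)"
    using n0 jn by auto
  finally show ?thesis unfolding x_def y_def h_def .
qed

lemma cip_scale:
  "cip Y (\<lambda>y. a * u y) (\<lambda>y. b * v y) = cnj a * b * cip Y u v"
  by (simp add: cip_def sum_distrib_left algebra_simps)

lemma is_normalized_signature_matrixI:
  fixes c :: "'x \<Rightarrow> complex" and \<nu> :: real
  assumes "\<nu> \<ge> 0"
    and unimodular: "\<And>x. x \<in> X \<Longrightarrow> cmod (c x) = 1"
    and norm: "\<And>x. x \<in> X \<Longrightarrow> cip Y (Phi x) (Phi x) = complex_of_real (\<nu>\<^sup>2)"
    and angle: "\<And>x y. x \<in> X \<Longrightarrow> y \<in> X \<Longrightarrow> x \<noteq> y \<Longrightarrow> cmod (cip Y (Phi x) (Phi y)) = 1"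
    and S: "\<And>x y. x \<in> X \<Longrightarrow> y \<in> X \<Longrightarrow>
              S x y = (if x = y then 0 else cnj (c x) * c y * cip Y (Phi x) (Phi y))"
    and first: "\<And>x. x \<in> X \<Longrightarrow> x \<noteq> x0 \<Longrightarrow> S x0 x = 1 \<and> S x x0 = 1"
  shows "is_normalized_signature_matrix Y X x0 Phi S"
proof -
  have cc: "cnj (c x) * c x = 1" if "x \<in> X" for x
    using unimodular[OF that] complex_norm_square[of "c x"] by (simp add: mult.commute)
  have "\<forall>x\<in>X. cip Y (\<lambda>y. c x * Phi x y) (\<lambda>y. c x * Phi x y) = complex_of_real (\<nu>\<^sup>2)"
    using cc norm by (simp add: cip_scale)
  moreover have "\<forall>x\<in>X. \<forall>y\<in>X. x \<noteq> y \<longrightarrow> cmod (cip Y (\<lambda>z. c x * Phi x z) (\<lambda>z. c y * Phi y z)) = 1"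
    using unimodular angle by (simp add: cip_scale norm_mult)
  moreover have "\<forall>x\<in>X. \<forall>y\<in>X. S x y = (cip Y (\<lambda>z. c x * Phi x z) (\<lambda>z. c y * Phi y z)
                   - (if x = y then complex_of_real (\<nu>\<^sup>2) else 0)) / complex_of_real 1"
    using S cc norm by (simp add: cip_scale)
  ultimately have "is_signature_matrix Y X (\<lambda>x y. c x * Phi x y) S"
    unfolding is_signature_matrix_def using \<open>\<nu> \<ge> 0\<close> zero_less_one by blast
  then show ?thesis
    unfolding is_normalized_signature_matrix_def using unimodular first by blast
qed


section \<open>The Gram matrix of the Gabor--Steiner frame\<close>

locale gabor_steiner_data =
  fixes m :: "nat list" and zeta :: "nat \<Rightarrow> complex"
  assumes odd_modulus: "l < length m \<Longrightarrow> odd (m ! l)"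
    and zeta_root: "l < length m \<Longrightarrow> zeta l ^ (m ! l) = 1"
    and zeta_primitive: "l < length m \<Longrightarrow> 0 < d \<Longrightarrow> d < m ! l \<Longrightarrow> zeta l ^ d \<noteq> 1"
begin

lemma modulus_pos: "l < length m \<Longrightarrow> 0 < m ! l"
  using odd_modulus by (simp add: odd_pos)

lemma odd_card: "odd (prod_list m)"
  using odd_modulus by (intro odd_prod_list) (auto simp: in_set_conv_nth)

abbreviation origin :: "nat list \<times> nat list" where
  "origin \<equiv> (ga_zero m, ga_zero m)"

lemma zeta_prod_mult:
  "zeta_prod m zeta e * zeta_prod m zeta e' = zeta_prod m zeta (\<lambda>l. e l + e' l)"
  unfolding zeta_prod_def prod.distrib[symmetric]
proof (rule prod.cong[OF refl])
  fix l assume "l \<in> {..<length m}"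
  then have "zeta l \<noteq> 0" using root_unity_nonzero[OF zeta_root modulus_pos] by simp
  then show "zeta l powi e l * zeta l powi e' l = zeta l powi (e l + e' l)"
    by (simp add: power_int_add)
qed

lemma cnj_zeta_prod: "cnj (zeta_prod m zeta e) = zeta_prod m zeta (\<lambda>l. - e l)"
  unfolding zeta_prod_def cnj_prod
  by (rule prod.cong[OF refl])
    (simp add: cnj_power_int_root_unity[OF zeta_root modulus_pos] del: complex_cnj_power_int)

lemma norm_zeta_prod: "norm (zeta_prod m zeta e) = 1"
  unfolding zeta_prod_def prod_norm[symmetric]
  by (rule prod.neutral) (simp add: norm_power_int norm_root_unity[OF zeta_root modulus_pos])

lemma zeta_prod_cong_mod:
  assumes "\<And>l. l < length m \<Longrightarrow> e l mod int (m ! l) = e' l mod int (m ! l)"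
  shows "zeta_prod m zeta e = zeta_prod m zeta e'"
  unfolding zeta_prod_def
proof (rule prod.cong[OF refl])
  fix l assume "l \<in> {..<length m}"
  then have l: "l < length m" by simp
  note reduce = power_int_mod_root_unity[OF zeta_root[OF l] modulus_pos[OF l]]
  have "zeta l powi e l = zeta l powi (e' l mod int (m ! l))"
    using reduce[of "e l"] assms[OF l] by simp
  then show "zeta l powi e l = zeta l powi e' l" using reduce by simp
qed

lemma cnj_character_mult:
  "cnj (character m zeta e j) * character m zeta e' j = character m zeta (\<lambda>l. e' l - e l) j"
  unfolding character_def cnj_zeta_prod zeta_prod_mult
  by (rule arg_cong[where f="zeta_prod m zeta"]) (simp add: fun_eq_iff algebra_simps)

lemma sum_character:
  "(\<Sum>j\<in>GA m. character m zeta e j)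
   = (if \<forall>l<length m. int (m ! l) dvd e l then of_nat (prod_list m) else 0)"
proof -
  have "(\<Sum>j\<in>GA m. character m zeta e j)
      = (\<Prod>l<length m. \<Sum>t<m ! l. zeta l powi (int t * e l))"
    unfolding character_def zeta_prod_def by (rule sum_GA_prod_nth)
  also have "\<dots> = (\<Prod>l<length m. if int (m ! l) dvd e l then of_nat (m ! l) else 0)"
    by (intro prod.cong refl sum_power_int_primitive_root zeta_root modulus_pos zeta_primitive) auto
  also have "\<dots> = (if \<forall>l<length m. int (m ! l) dvd e l then of_nat (prod_list m) else 0)"
    by (auto simp: prod.list_conv_set_nth atLeast0LessThan intro: prod_zero)
  finally show ?thesis .
qed

lemma sum_character_diff:
  assumes "\<kappa> \<in> GA m" "\<kappa>' \<in> GA m"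
  shows "(\<Sum>j\<in>GA m. character m zeta (\<lambda>l. int (\<kappa>' ! l) - int (\<kappa> ! l)) j)
       = (if \<kappa> = \<kappa>' then of_nat (prod_list m) else 0)"
proof -
  have "int (m ! l) dvd int (\<kappa>' ! l) - int (\<kappa> ! l) \<longleftrightarrow> \<kappa> ! l = \<kappa>' ! l" if "l < length m" for l
  proof
    assume dvd: "int (m ! l) dvd int (\<kappa>' ! l) - int (\<kappa> ! l)"
    have "\<kappa> ! l < m ! l" "\<kappa>' ! l < m ! l" using assms that by (auto simp: GA_def)
    then have "\<bar>int (\<kappa>' ! l) - int (\<kappa> ! l)\<bar> < int (m ! l)" by (simp add: abs_less_iff)
    with dvd have "int (\<kappa>' ! l) - int (\<kappa> ! l) = 0"
      using zdvd_imp_le[of "int (m ! l)" "\<bar>int (\<kappa>' ! l) - int (\<kappa> ! l)\<bar>"] by fastforce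
    then show "\<kappa> ! l = \<kappa>' ! l" by simp
  qed simp
  then have "(\<forall>l<length m. int (m ! l) dvd int (\<kappa>' ! l) - int (\<kappa> ! l)) \<longleftrightarrow> \<kappa> = \<kappa>'"
    using assms by (auto simp: GA_def list_eq_iff_nth_eq)
  then show ?thesis by (simp add: sum_character)
qed

definition inv_two :: "nat \<Rightarrow> int" where
  "inv_two l = int ((m ! l + 1) div 2)"

text \<open>\<open>pair_point k k'\<close> is the unique \<open>j\<close> with \<open>j + k' = -(j + k) - 1\<close>, and \<open>cross_term\<close> is
  the value of the character \<open>\<kappa>' - \<kappa>\<close> there; the Gram matrix is \<open>|m| I - cross_term\<close>.\<close>

definition pair_point :: "nat list \<Rightarrow> nat list \<Rightarrow> nat list" where
  "pair_point k k' =
     map (\<lambda>l. nat ((inv_two l * (- 1 - int (k ! l) - int (k' ! l))) mod int (m ! l))) [0..<length m]"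

lemma pair_point_in_GA: "pair_point k k' \<in> GA m"
  using modulus_pos by (auto simp: GA_def pair_point_def nat_less_iff)

lemma ga_add_eq_neg_minus_one_iff:
  assumes j: "j \<in> GA m"
  shows "ga_add m j k' = ga_neg_minus_one m (ga_add m j k) \<longleftrightarrow> j = pair_point k k'"
proof -
  have "ga_add m j k' ! l = ga_neg_minus_one m (ga_add m j k) ! l \<longleftrightarrow> j ! l = pair_point k k' ! l"
    if l: "l < length m" for l
  proof -
    have "ga_neg_minus_one m (ga_add m j k) ! l = m ! l - 1 - ga_add m j k ! l"
      using nth_ga_neg_minus_one[OF ga_add_in_GA l] modulus_pos by blast
    moreover have "j ! l < m ! l" using j l by (auto simp: GA_def)
    ultimately show ?thesis
      using add_mod_eq_complement_iff[OF odd_modulus[OF l], of "j ! l" "k' ! l" "k ! l"] l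
      by (simp add: nth_ga_add pair_point_def inv_two_def)
  qed
  then show ?thesis
    using j pair_point_in_GA[of k k'] by (auto simp: GA_def list_eq_iff_nth_eq)
qed

definition cross_term :: "nat list \<times> nat list \<Rightarrow> nat list \<times> nat list \<Rightarrow> complex" where
  "cross_term x y = (case x of (k, \<kappa>) \<Rightarrow> case y of (k', \<kappa>') \<Rightarrow>
     zeta_prod m zeta (\<lambda>l. inv_two l * (- 1 - int (k ! l) - int (k' ! l)) * (int (\<kappa>' ! l) - int (\<kappa> ! l))))"

lemma character_pair_point:
  "character m zeta (\<lambda>l. int (\<kappa>' ! l) - int (\<kappa> ! l)) (pair_point k k') = cross_term (k, \<kappa>) (k', \<kappa>')"
  unfolding character_def cross_term_def prod.case
  by (rule zeta_prod_cong_mod) (simp add: pair_point_def mod_mult_left_eq modulus_pos)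

lemma inner_gabor_steiner_fibre:
  assumes "j \<in> GA m" "k \<in> GA m" "k' \<in> GA m"
  shows "(\<Sum>i\<in>Iset m. cnj (gabor_steiner m zeta (k, \<kappa>) (i, j)) * gabor_steiner m zeta (k', \<kappa>') (i, j))
       = character m zeta (\<lambda>l. int (\<kappa>' ! l) - int (\<kappa> ! l)) j
         * ((if k = k' then 1 else 0) - (if j = pair_point k k' then 1 else 0))"
proof -
  have pos: "\<forall>l<length m. 0 < m ! l" using modulus_pos by blast
  have "cnj (phi_vec m i a) = phi_vec m i a" for i a by (simp add: phi_vec_def)
  then have "(\<Sum>i\<in>Iset m. cnj (gabor_steiner m zeta (k, \<kappa>) (i, j)) * gabor_steiner m zeta (k', \<kappa>') (i, j))
      = character m zeta (\<lambda>l. int (\<kappa>' ! l) - int (\<kappa> ! l)) j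
        * (\<Sum>i\<in>Iset m. phi_vec m i (ga_add m j k) * phi_vec m i (ga_add m j k'))"
    using assms(1)
    by (simp add: gabor_steiner_eq[OF pos] sum_distrib_left algebra_simps
        flip: cnj_character_mult)
  also have "(\<Sum>i\<in>Iset m. phi_vec m i (ga_add m j k) * phi_vec m i (ga_add m j k'))
      = (if k = k' then 1 else 0) - (if j = pair_point k k' then 1 else 0)"
    using sum_Iset_phi_vec[OF odd_card ga_add_in_GA[OF pos] ga_add_in_GA[OF pos]]
      ga_add_left_cancel[OF assms(2,3)] ga_add_eq_neg_minus_one_iff[OF assms(1)] by simp
  finally show ?thesis .
qed

lemma inner_gabor_steiner:
  assumes "x \<in> GA m \<times> GA m" "y \<in> GA m \<times> GA m"
  shows "cip (gs_coords m) (gabor_steiner m zeta x) (gabor_steiner m zeta y)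
       = (if x = y then of_nat (prod_list m) else 0) - cross_term x y"
proof -
  obtain k \<kappa> k' \<kappa>' where xy: "x = (k, \<kappa>)" "y = (k', \<kappa>')"
    and GA: "k \<in> GA m" "\<kappa> \<in> GA m" "k' \<in> GA m" "\<kappa>' \<in> GA m"
    using assms by auto
  let ?\<chi> = "character m zeta (\<lambda>l. int (\<kappa>' ! l) - int (\<kappa> ! l))"
  have "cip (gs_coords m) (gabor_steiner m zeta x) (gabor_steiner m zeta y)
      = (\<Sum>i\<in>Iset m. \<Sum>j\<in>GA m. cnj (gabor_steiner m zeta x (i, j)) * gabor_steiner m zeta y (i, j))"
    unfolding cip_def gs_coords_def by (simp add: sum.cartesian_product)
  also have "\<dots> = (\<Sum>j\<in>GA m. \<Sum>i\<in>Iset m. cnj (gabor_steiner m zeta x (i, j)) * gabor_steiner m zeta y (i, j))"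
    by (rule sum.swap)
  also have "\<dots> = (\<Sum>j\<in>GA m. ?\<chi> j * ((if k = k' then 1 else 0) - (if j = pair_point k k' then 1 else 0)))"
    unfolding xy using GA by (intro sum.cong refl inner_gabor_steiner_fibre) auto
  also have "\<dots> = (\<Sum>j\<in>GA m. ?\<chi> j * (if k = k' then 1 else 0))
                    - (\<Sum>j\<in>GA m. ?\<chi> j * (if j = pair_point k k' then 1 else 0))"
    by (simp only: right_diff_distrib sum_subtractf)
  also have "\<dots> = (if k = k' then \<Sum>j\<in>GA m. ?\<chi> j else 0) - ?\<chi> (pair_point k k')"
    using finite_GA pair_point_in_GA by (cases "k = k'") (simp_all add: mult_if_delta)
  also have "\<dots> = (if x = y then of_nat (prod_list m) else 0) - cross_term x y"
    unfolding xy sum_character_diff[OF GA(2,4)] character_pair_point by simp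
  finally show ?thesis .
qed

lemma cross_term_diag: "cross_term x x = 1"
  by (simp add: cross_term_def zeta_prod_def split: prod.split)

lemma norm_cross_term: "norm (cross_term x y) = 1"
  by (simp add: cross_term_def norm_zeta_prod split: prod.split)

lemma cnj_cross_term: "cnj (cross_term x y) = cross_term y x"
proof -
  obtain k \<kappa> k' \<kappa>' where xy: "x = (k, \<kappa>)" "y = (k', \<kappa>')" by fastforce
  show ?thesis
    unfolding xy cross_term_def prod.case cnj_zeta_prod
    by (intro arg_cong[where f="zeta_prod m zeta"]) (simp add: fun_eq_iff algebra_simps)
qed

lemma cross_term_cocycle:
  "cross_term origin (k, \<kappa>) * cross_term (k, \<kappa>) (k', \<kappa>') * cross_term (k', \<kappa>') origin
   = zeta_prod m zeta (\<lambda>l. inv_two l * (int (\<kappa> ! l) * int (k' ! l) - int (\<kappa>' ! l) * int (k ! l)))"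
  unfolding cross_term_def prod.case zeta_prod_mult
  by (rule zeta_prod_cong_mod) (simp add: nth_ga_zero algebra_simps)

lemma cross_term_mult_swap: "cross_term x y * cross_term y x = 1"
  using norm_cross_term[of x y] complex_norm_square[of "cross_term x y"] cnj_cross_term[of x y]
  by simp

lemma Sbar_eq_zeta_prod:
  assumes "(k, \<kappa>) \<noteq> (k', \<kappa>')" "(k, \<kappa>) \<noteq> origin" "(k', \<kappa>') \<noteq> origin"
  shows "Sbar m zeta (k, \<kappa>) (k', \<kappa>')
       = - zeta_prod m zeta (\<lambda>l. inv_two l * (int (\<kappa> ! l) * int (k' ! l) - int (\<kappa>' ! l) * int (k ! l)))"
proof -
  have "Sbar m zeta (k, \<kappa>) (k', \<kappa>') = - (\<Prod>l<length m. zeta l ^ nat ((inv_two l *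
          (int (\<kappa> ! l) * int (k' ! l) - int (\<kappa>' ! l) * int (k ! l))) mod int (m ! l)))"
    using assms unfolding Sbar_def Let_def inv_two_def by simp
  then show ?thesis
    unfolding zeta_prod_def by (simp add: power_nat_mod_root_unity[OF zeta_root modulus_pos])
qed

definition normalizing_phase :: "nat list \<times> nat list \<Rightarrow> complex" where
  "normalizing_phase x = (if x = origin then 1 else - cross_term x origin)"

lemma norm_normalizing_phase: "norm (normalizing_phase x) = 1"
  by (simp add: normalizing_phase_def norm_cross_term)

lemma Sbar_off_diagonal:
  assumes x: "x \<in> GA m \<times> GA m" and y: "y \<in> GA m \<times> GA m" and "x \<noteq> y"
  shows "Sbar m zeta x y = cnj (normalizing_phase x) * normalizing_phase y
           * cip (gs_coords m) (gabor_steiner m zeta x) (gabor_steiner m zeta y)"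
proof -
  have "cnj (normalizing_phase x) * normalizing_phase y
          * cip (gs_coords m) (gabor_steiner m zeta x) (gabor_steiner m zeta y)
      = (if x = origin then 1 else - cross_term origin x) * (if y = origin then 1 else - cross_term y origin)
          * - cross_term x y"
    using inner_gabor_steiner[OF x y] \<open>x \<noteq> y\<close> by (simp add: normalizing_phase_def cnj_cross_term)
  also have "\<dots> = Sbar m zeta x y"
  proof -
    obtain k \<kappa> k' \<kappa>' where xy: "x = (k, \<kappa>)" "y = (k', \<kappa>')" by fastforce
    consider (first_row) "x = origin" | (first_column) "y = origin"
      | (generic) "x \<noteq> origin" "y \<noteq> origin" by blast
    then show ?thesis
    proof cases
      case first_row
      then show ?thesis using \<open>x \<noteq> y\<close> cross_term_mult_swap[of origin y]
        by (simp add: Sbar_def mult.commute)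
    next
      case first_column
      then show ?thesis using \<open>x \<noteq> y\<close> cross_term_mult_swap[of x origin]
        by (simp add: Sbar_def mult.commute)
    next
      case generic
      then have "(if x = origin then 1 else - cross_term origin x)
            * (if y = origin then 1 else - cross_term y origin) * - cross_term x y
          = - (cross_term origin x * cross_term x y * cross_term y origin)"
        by (simp add: algebra_simps)
      also have "\<dots> = Sbar m zeta x y"
        using generic \<open>x \<noteq> y\<close> unfolding xy cross_term_cocycle by (simp add: Sbar_eq_zeta_prod)
      finally show ?thesis .
    qed
  qed
  finally show ?thesis ..
qed

theorem normalized_signature_matrix_Sbar:
  "is_normalized_signature_matrix (gs_coords m) (GA m \<times> GA m) origin (gabor_steiner m zeta) (Sbar m zeta)"
proof (rule is_normalized_signature_matrixI[where c = normalizing_phase])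
  have "prod_list m \<ge> 1" using odd_card by (cases "prod_list m") auto
  then show "sqrt (real (prod_list m) - 1) \<ge> 0" by simp
  fix x assume x: "x \<in> GA m \<times> GA m"
  show "cmod (normalizing_phase x) = 1" by (rule norm_normalizing_phase)
  show "cip (gs_coords m) (gabor_steiner m zeta x) (gabor_steiner m zeta x)
      = complex_of_real ((sqrt (real (prod_list m) - 1))\<^sup>2)"
    using inner_gabor_steiner[OF x x] \<open>prod_list m \<ge> 1\<close> by (simp add: cross_term_diag of_nat_diff)
  fix y assume y: "y \<in> GA m \<times> GA m"
  show "cmod (cip (gs_coords m) (gabor_steiner m zeta x) (gabor_steiner m zeta y)) = 1" if "x \<noteq> y"
    using inner_gabor_steiner[OF x y] that by (simp add: norm_cross_term)
  show "Sbar m zeta x y = (if x = y then 0 else cnj (normalizing_phase x) * normalizing_phase y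
           * cip (gs_coords m) (gabor_steiner m zeta x) (gabor_steiner m zeta y))"
    using Sbar_off_diagonal[OF x y] by (simp add: Sbar_def)
next
  show "Sbar m zeta origin x = 1 \<and> Sbar m zeta x origin = 1" if "x \<noteq> origin" for x
    using that by (simp add: Sbar_def)
qed

end

theorem mainTheorem3:
  fixes m :: "nat list" and zeta :: "nat \<Rightarrow> complex"
  assumes "m \<noteq> []"
    and "\<forall>l<length m. odd (m ! l) \<and> m ! l \<ge> 3"
    and "\<forall>l<length m. zeta l ^ (m ! l) = 1 \<and> (\<forall>d. 0 < d \<and> d < m ! l \<longrightarrow> zeta l ^ d \<noteq> 1)"
  shows "is_normalized_signature_matrix (gs_coords m) (GA m \<times> GA m) (ga_zero m, ga_zero m)
           (gabor_steiner m zeta) (Sbar m zeta)"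
proof -
  interpret gabor_steiner_data m zeta
    using assms(2,3) by unfold_locales auto
  show ?thesis by (rule normalized_signature_matrix_Sbar)
qed

end
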